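(* In the i.i.d. setting below, assume [B1]–[B5]. Then $n_1^-\to^p0$ and $n_1^{1/2}d_n\to^p0$ (condition [A5]), and $$n_1^-\sum_{i\in G^1}Y^i_\tau\to^p\widetilde q_\tau:=E[Y^1_\tau\mid X^1\in\mathcal X,Z^1=1]>0$$ (condition [A7]).
   Context: For each $n\in\mathbb N$, $\mathbb G=\{1,\dots,n\}$ and each $i$ has a survival time $T^i>0$, censoring time $U^i>0$, covariate $X^i\in\mathbb R^d$ and assignment $Z^i\in\{0,1\}$; the vectors $V^i=(X^i,Z^i,T^i,U^i)$, $i=1,\dots,n$, are i.i.d. for each $n$, and for each $z$ the conditional law of $(X^1,T^1,U^1)$ given $Z^1=z$ does not depend on $n$. Put $\widetilde T^i=T^i\wedge U^i$, $\mathbb G^z=\{i:Z^i=z\}$, $Y^i_t=1_{\{\widetilde T^i\ge t\}}$. Fix $\tau>0$, a compact $\mathcal X\subset\mathbb R^d$ and, for each $n$, a finite partition $\mathbb A$ of $\mathcal X$ into measurable sets; $d_n=\max_{a\in\mathbb A}\mathrm{diam}(a)$. Let $\mathcal P=\{(i,j)\in\mathbb G^1\times\mathbb G^0:\ X^i,X^j\in a\text{ for some }a\in\mathbb A\}$, $G^1$ the set of first coordinates of elements of $\mathcal P$, $n_1=\#G^1$; $x^-=x^{-1}$ if $x\ne0$, $0^-=0$. $a_n\lesssim b_n$ means $a_n\le Cb_n$ for a constant $C>0$ and all $n$; $a_n\asymp b_n$ means both $\lesssim$ and $\gtrsim$. [B1]: constants $\beta,\theta\in(0,1)$ and $\bar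 d\in\{1,\dots,d\}$ satisfy $\beta<2\theta$ and $\bar d\theta<1$. [B2]: $P(Z^1=1)\asymp n^{\beta-1}$. [B3]: the conditional law of $X^1$ given $Z^1=z$ has a density $f(\cdot\mid z)$ w.r.t. a $\sigma$-finite measure $\nu$ on $\mathbb R^d$ with $\nu(\mathcal X)<\infty$, and $\operatorname{ess\,sup}_{x\in\mathcal X}f(x\mid1)<\infty$, $\operatorname{ess\,inf}_{x\in\mathcal X}\big(f(x\mid0)E[Y^1_\tau\mid X^1=x,Z^1=0]\big)>0$ (w.r.t. $\nu$). [B4]: $P(\widetilde T^1=s,X^1\in\mathcal X\mid Z^1=1)=0$ for all $s\in[0,\tau]$ and $P(\widetilde T^1\ge\tau,X^1\in\mathcal X\mid Z^1=1)>0$. [B5]: $d_n=O(n^{-\theta})$ and $n^{-\bar d\theta}\lesssim\min_{a\in\mathbb A}\nu(a)\le\max_{a\in\mathbb A}\nu(a)\lesssim n^{-\bar d\theta}$. *)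

theory Defs
  imports "HOL-Probability.Probability"
begin

type_synonym 'x unit_rec = "bool \<times> 'x \<times> real \<times> real"

definition Zv :: "'x unit_rec \<Rightarrow> bool" where "Zv v = fst v"
definition Xv :: "'x unit_rec \<Rightarrow> 'x" where "Xv v = fst (snd v)"
definition Tv :: "'x unit_rec \<Rightarrow> real" where "Tv v = fst (snd (snd v))"
definition Uv :: "'x unit_rec \<Rightarrow> real" where "Uv v = snd (snd (snd v))"

definition Ttil :: "'x unit_rec \<Rightarrow> real" where "Ttil v = min (Tv v) (Uv v)"
definition Yat :: "real \<Rightarrow> 'x unit_rec \<Rightarrow> real" where
  "Yat t v = (if t \<le> Ttil v then 1 else 0)"

definition conv_prob :: "(nat \<Rightarrow> 'a measure) \<Rightarrow> (nat \<Rightarrow> 'a \<Rightarrow> real) \<Rightarrow> real \<Rightarrow> bool" where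
  "conv_prob M W c \<longleftrightarrow>
     (\<forall>e>0. (\<lambda>n. measure (M n) {\<omega> \<in> space (M n). e < \<bar>W n \<omega> - c\<bar>}) \<longlonglongrightarrow> 0)"

text \<open>The i.i.d. sample of size n: \<omega> i is the record V^i, i = 1..n.\<close>
definition sample_space :: "'x unit_rec measure \<Rightarrow> nat \<Rightarrow> (nat \<Rightarrow> 'x unit_rec) measure" where
  "sample_space L n = PiM {1..n} (\<lambda>_. L)"

definition G1 :: "'x set set \<Rightarrow> nat \<Rightarrow> (nat \<Rightarrow> 'x unit_rec) \<Rightarrow> nat set" where
  "G1 A n \<omega> = {i \<in> {1..n}. Zv (\<omega> i) \<and>
      (\<exists>j \<in> {1..n}. \<not> Zv (\<omega> j) \<and> (\<exists>a\<in>A. Xv (\<omega> i) \<in> a \<and> Xv (\<omega> j) \<in> a))}"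

definition n1 :: "'x set set \<Rightarrow> nat \<Rightarrow> (nat \<Rightarrow> 'x unit_rec) \<Rightarrow> nat" where
  "n1 A n \<omega> = card (G1 A n \<omega>)"

definition pinv :: "real \<Rightarrow> real" where "pinv x = (if x = 0 then 0 else 1 / x)"

definition mesh :: "'x::metric_space set set \<Rightarrow> real" where
  "mesh A = (if A = {} then 0 else Max (diameter ` A))"

end

theory Submission
  imports Defs "HOL-Real_Asymp.Real_Asymp"
begin

text \<open>
  Call a sample unmatched if some cell of the partition contains no control. By [B3] and [B5]
  every cell carries control mass of order \<open>n^(-d\<theta>)\<close> and there are \<open>O(n^(d\<theta>))\<close> cells, so
  unmatched samples have probability \<open>O(n^(d\<theta>) exp(-c n^(1-d\<theta>)))\<close>, which tends to 0 because
  \<open>d\<theta> < 1\<close>. On a matched sample \<open>G\<^sup>1\<close> is exactly the set of treated units with covariate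
  in \<open>\<X>\<close>, so \<open>n\<^sub>1\<close> and \<open>\<Sum>i\<in>G\<^sup>1. Y\<^sub>\<tau>(i)\<close> are binomial counts with means \<open>\<mu>\<^sub>n \<asymp> n^\<beta>\<close> and
  \<open>q \<mu>\<^sub>n\<close>. Chebyshev's inequality concentrates both counts around their means, which gives
  \<open>1/n\<^sub>1 \<rightarrow> 0\<close>, \<open>sqrt n\<^sub>1 d\<^sub>n = O(n^(\<beta>/2-\<theta>)) \<rightarrow> 0\<close> and convergence of their ratio to \<open>q\<close>.
\<close>

section \<open>Counts in i.i.d. samples\<close>

lemma finite_product_prob_space_iid:
  assumes "prob_space L" "finite I"
  shows "finite_product_prob_space (\<lambda>_. L) I"
proof -
  interpret L: prob_space L by fact
  show ?thesis
    by (intro finite_product_prob_space.intro finite_product_sigma_finite.intro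
        product_prob_spaceI finite_product_sigma_finite_axioms.intro)
      (auto simp: product_sigma_finite_def assms(2)
        intro: L.prob_space_axioms L.sigma_finite_measure_axioms)
qed

lemma measure_PiM_iid_all_in:
  assumes L: "prob_space L" and E: "E \<in> sets L" and I: "finite I" and J: "J \<subseteq> I"
  shows "measure (PiM I (\<lambda>_. L)) {\<omega> \<in> space (PiM I (\<lambda>_. L)). \<forall>i\<in>J. \<omega> i \<in> E}
    = measure L E ^ card J"
proof -
  interpret L: prob_space L by fact
  interpret finite_product_prob_space "\<lambda>_. L" I
    using finite_product_prob_space_iid[OF L I] .
  have "{\<omega> \<in> space (PiM I (\<lambda>_. L)). \<forall>i\<in>J. \<omega> i \<in> E}
      = (\<Pi>\<^sub>E i\<in>I. if i \<in> J then E else space L)"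
    using J sets.sets_into_space[OF E]
    by (auto simp: space_PiM PiE_iff extensional_def split: if_splits; fastforce)
  moreover have "prob (\<Pi>\<^sub>E i\<in>I. if i \<in> J then E else space L)
      = (\<Prod>i\<in>I. if i \<in> J then measure L E else 1)"
    using E by (subst prob_times) (auto intro!: prod.cong simp: L.prob_space)
  moreover have "(\<Prod>i\<in>I. if i \<in> J then measure L E else 1) = measure L E ^ card J"
    using J I by (simp add: prod.If_cases Int_absorb1)
  ultimately show ?thesis by simp
qed

lemma measure_PiM_iid_none_in:
  assumes L: "prob_space L" and E: "E \<in> sets L" and I: "finite I"
  shows "measure (PiM I (\<lambda>_. L)) {\<omega> \<in> space (PiM I (\<lambda>_. L)). \<forall>i\<in>I. \<omega> i \<notin> E}
    = (1 - measure L E) ^ card I"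
proof -
  interpret L: prob_space L by fact
  have "{\<omega> \<in> space (PiM I (\<lambda>_. L)). \<forall>i\<in>I. \<omega> i \<notin> E}
      = {\<omega> \<in> space (PiM I (\<lambda>_. L)). \<forall>i\<in>I. \<omega> i \<in> space L - E}"
    by (auto simp: space_PiM)
  then show ?thesis
    using measure_PiM_iid_all_in[OF L _ I order_refl, of "space L - E"] E
    by (simp add: L.prob_compl)
qed

lemma one_minus_power_le_exp:
  fixes p :: real
  assumes "p \<le> 1"
  shows "(1 - p) ^ n \<le> exp (- (real n * p))"
proof -
  have "(1 - p) ^ n \<le> exp (- p) ^ n"
    using exp_ge_add_one_self[of "- p"] assms by (intro power_mono) auto
  also have "\<dots> = exp (- (real n * p))"
    by (simp add: exp_of_nat_mult[symmetric])
  finally show ?thesis .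
qed

lemma measure_PiM_iid_some_missed_le:
  assumes L: "prob_space L" and I: "finite I" and C: "finite C"
    and E: "\<And>a. a \<in> C \<Longrightarrow> E a \<in> sets L" and p: "\<And>a. a \<in> C \<Longrightarrow> p \<le> measure L (E a)"
  shows "measure (PiM I (\<lambda>_. L)) (\<Union>a\<in>C. {\<omega> \<in> space (PiM I (\<lambda>_. L)). \<forall>i\<in>I. \<omega> i \<notin> E a})
    \<le> real (card C) * exp (- (real (card I) * p))"
proof -
  interpret L: prob_space L by fact
  let ?missed = "\<lambda>a. {\<omega> \<in> space (PiM I (\<lambda>_. L)). \<forall>i\<in>I. \<omega> i \<notin> E a}"
  have "?missed a \<in> sets (PiM I (\<lambda>_. L))" if "a \<in> C" for a
  proof (intro sets.sets_Collect_finite_All I)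
    fix i assume "i \<in> I"
    then show "{\<omega> \<in> space (PiM I (\<lambda>_. L)). \<omega> i \<notin> E a} \<in> sets (PiM I (\<lambda>_. L))"
      using E[OF that] by measurable
  qed
  then have "measure (PiM I (\<lambda>_. L)) (\<Union>a\<in>C. ?missed a)
      \<le> (\<Sum>a\<in>C. measure (PiM I (\<lambda>_. L)) (?missed a))"
    using C by (intro measure_UNION_le) auto
  also have "\<dots> \<le> (\<Sum>a\<in>C. exp (- (real (card I) * p)))"
  proof (intro sum_mono)
    fix a assume a: "a \<in> C"
    have "measure (PiM I (\<lambda>_. L)) (?missed a) = (1 - measure L (E a)) ^ card I"
      by (rule measure_PiM_iid_none_in[OF L E[OF a] I])
    also have "\<dots> \<le> exp (- (real (card I) * measure L (E a)))"
      by (intro one_minus_power_le_exp) simp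
    also have "\<dots> \<le> exp (- (real (card I) * p))"
      using p[OF a] by (simp add: mult_left_mono)
    finally show "measure (PiM I (\<lambda>_. L)) (?missed a) \<le> exp (- (real (card I) * p))" .
  qed
  finally show ?thesis by simp
qed

definition count_in :: "nat set \<Rightarrow> 'a set \<Rightarrow> (nat \<Rightarrow> 'a) \<Rightarrow> real" where
  "count_in I E \<omega> = real (card {i \<in> I. \<omega> i \<in> E})"

lemma count_in_eq_sum_indicator:
  "finite I \<Longrightarrow> count_in I E \<omega> = (\<Sum>i\<in>I. indicator E (\<omega> i))"
  by (simp add: count_in_def indicator_def sum.If_cases Int_def)

lemma count_in_measurable [measurable]:
  assumes "finite I" "E \<in> sets L"
  shows "count_in I E \<in> borel_measurable (PiM I (\<lambda>_. L))"
proof -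
  have "count_in I E = (\<lambda>\<omega>. \<Sum>i\<in>I. indicator E (\<omega> i))"
    using assms(1) by (simp add: fun_eq_iff count_in_eq_sum_indicator)
  then show ?thesis
    using assms by simp
qed

lemma expectation_indicator_pair_iid:
  assumes L: "prob_space L" and E: "E \<in> sets L" and I: "finite I" and ij: "i \<in> I" "j \<in> I"
  shows "prob_space.expectation (PiM I (\<lambda>_. L)) (\<lambda>\<omega>. indicator E (\<omega> i) * indicator E (\<omega> j))
    = (if i = j then measure L E else (measure L E)\<^sup>2)"
proof -
  let ?\<Omega> = "PiM I (\<lambda>_. L)"
  let ?both = "{\<omega> \<in> space ?\<Omega>. \<forall>k\<in>{i, j}. \<omega> k \<in> E}"
  have "?both \<in> sets ?\<Omega>"
    using E ij by measurable (auto simp: ij)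
  then have "prob_space.expectation ?\<Omega> (\<lambda>\<omega>. indicator E (\<omega> i) * indicator E (\<omega> j))
      = prob_space.expectation ?\<Omega> (indicator ?both :: _ \<Rightarrow> real)"
    by (intro Bochner_Integration.integral_cong) (auto simp: indicator_def)
  also have "\<dots> = measure ?\<Omega> ?both"
    using \<open>?both \<in> sets ?\<Omega>\<close> by simp
  also have "\<dots> = measure L E ^ card {i, j}"
    using ij by (intro measure_PiM_iid_all_in[OF L E I]) auto
  finally show ?thesis
    by (simp add: power2_eq_square)
qed

lemma variance_count_in_iid:
  assumes L: "prob_space L" and E: "E \<in> sets L" and I: "finite I"
  defines "\<Omega> \<equiv> PiM I (\<lambda>_. L)"
  shows "prob_space.expectation \<Omega> (count_in I E) = real (card I) * measure L E"
    and "prob_space.variance \<Omega> (count_in I E) = real (card I) * (measure L E - (measure L E)\<^sup>2)"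
    and "integrable \<Omega> (\<lambda>\<omega>. (count_in I E \<omega>)\<^sup>2)"
proof -
  interpret \<Omega>: prob_space \<Omega>
    unfolding \<Omega>_def by (rule prob_space_PiM) (rule L)
  define p where "p = measure L E"
  let ?ind = "\<lambda>i \<omega>. indicator E (\<omega> i) :: real"
  have ind_meas: "?ind i \<in> borel_measurable \<Omega>" if "i \<in> I" for i
    using that E unfolding \<Omega>_def by measurable
  have ind_int: "integrable \<Omega> (?ind i)" if "i \<in> I" for i
    using that by (intro \<Omega>.integrable_const_bound[where B=1] ind_meas) (auto simp: indicator_def)
  have pair_int: "integrable \<Omega> (\<lambda>\<omega>. ?ind i \<omega> * ?ind j \<omega>)" if "i \<in> I" "j \<in> I" for i j
    using that by (intro \<Omega>.integrable_const_bound[where B=1] borel_measurable_times ind_meas)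
      (auto simp: indicator_def)
  have pair_E: "\<Omega>.expectation (\<lambda>\<omega>. ?ind i \<omega> * ?ind j \<omega>) = (if i = j then p else p\<^sup>2)"
    if "i \<in> I" "j \<in> I" for i j
    unfolding \<Omega>_def p_def using that by (rule expectation_indicator_pair_iid[OF L E I])
  have count: "count_in I E = (\<lambda>\<omega>. \<Sum>i\<in>I. ?ind i \<omega>)"
    using I by (simp add: fun_eq_iff count_in_eq_sum_indicator)
  have sq: "(\<lambda>\<omega>. (count_in I E \<omega>)\<^sup>2) = (\<lambda>\<omega>. \<Sum>i\<in>I. \<Sum>j\<in>I. ?ind i \<omega> * ?ind j \<omega>)"
    by (simp add: count power2_eq_square sum_product)
  have count_int: "integrable \<Omega> (count_in I E)"
    unfolding count using ind_int by (rule Bochner_Integration.integrable_sum)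
  show mean: "\<Omega>.expectation (count_in I E) = real (card I) * p"
  proof -
    have "\<Omega>.expectation (count_in I E) = (\<Sum>i\<in>I. \<Omega>.expectation (?ind i))"
      unfolding count using ind_int by (rule Bochner_Integration.integral_sum)
    also have "\<dots> = (\<Sum>i\<in>I. p)"
    proof (intro sum.cong refl)
      fix i assume "i \<in> I"
      have "(\<lambda>\<omega>. ?ind i \<omega> * ?ind i \<omega>) = ?ind i"
        by (simp add: fun_eq_iff indicator_def)
      then show "\<Omega>.expectation (?ind i) = p"
        using pair_E[OF \<open>i \<in> I\<close> \<open>i \<in> I\<close>] by simp
    qed
    finally show ?thesis by simp
  qed
  show sq_int: "integrable \<Omega> (\<lambda>\<omega>. (count_in I E \<omega>)\<^sup>2)"
    unfolding sq using pair_int by (intro Bochner_Integration.integrable_sum) auto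
  have "\<Omega>.expectation (\<lambda>\<omega>. (count_in I E \<omega>)\<^sup>2)
      = (\<Sum>i\<in>I. \<Omega>.expectation (\<lambda>\<omega>. \<Sum>j\<in>I. ?ind i \<omega> * ?ind j \<omega>))"
    unfolding sq using pair_int
    by (intro Bochner_Integration.integral_sum Bochner_Integration.integrable_sum) auto
  also have "\<dots> = (\<Sum>i\<in>I. \<Sum>j\<in>I. \<Omega>.expectation (\<lambda>\<omega>. ?ind i \<omega> * ?ind j \<omega>))"
    using pair_int by (intro sum.cong refl Bochner_Integration.integral_sum) auto
  also have "\<dots> = (\<Sum>i\<in>I. \<Sum>j\<in>I. p\<^sup>2 + (if i = j then p - p\<^sup>2 else 0))"
    using pair_E by (intro sum.cong) auto
  also have "\<dots> = real (card I) * (real (card I) * p\<^sup>2) + real (card I) * (p - p\<^sup>2)"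
    using I by (simp add: sum.distrib algebra_simps)
  finally have second_moment: "\<Omega>.expectation (\<lambda>\<omega>. (count_in I E \<omega>)\<^sup>2)
      = real (card I) * (real (card I) * p\<^sup>2) + real (card I) * (p - p\<^sup>2)" .
  have "\<Omega>.variance (count_in I E)
      = \<Omega>.expectation (\<lambda>\<omega>. (count_in I E \<omega>)\<^sup>2) - (\<Omega>.expectation (count_in I E))\<^sup>2"
    by (rule \<Omega>.variance_eq[OF count_int sq_int])
  also have "\<dots> = real (card I) * (p - p\<^sup>2)"
    unfolding second_moment mean by (simp add: power2_eq_square algebra_simps)
  finally show "\<Omega>.variance (count_in I E) = real (card I) * (p - p\<^sup>2)" .
qed

lemma count_in_Chebyshev_iid:
  assumes L: "prob_space L" and E: "E \<in> sets L" and I: "finite I" and t: "t > 0"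
  shows "measure (PiM I (\<lambda>_. L))
      {\<omega> \<in> space (PiM I (\<lambda>_. L)). t \<le> \<bar>count_in I E \<omega> - real (card I) * measure L E\<bar>}
    \<le> real (card I) * measure L E / t\<^sup>2"
proof -
  interpret \<Omega>: prob_space "PiM I (\<lambda>_. L)"
    by (rule prob_space_PiM) (rule L)
  have "\<Omega>.prob {\<omega> \<in> space (PiM I (\<lambda>_. L)).
        t \<le> \<bar>count_in I E \<omega> - \<Omega>.expectation (count_in I E)\<bar>}
      \<le> \<Omega>.variance (count_in I E) / t\<^sup>2"
    by (rule \<Omega>.Chebyshev_inequality[OF count_in_measurable[OF I E]
          variance_count_in_iid(3)[OF L E I] t])
  also have "\<dots> \<le> real (card I) * measure L E / t\<^sup>2"
    unfolding variance_count_in_iid(2)[OF L E I]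
    by (intro divide_right_mono mult_left_mono) auto
  finally show ?thesis
    unfolding variance_count_in_iid(1)[OF L E I] .
qed

definition count_deviates :: "'a measure \<Rightarrow> 'a set \<Rightarrow> nat \<Rightarrow> real \<Rightarrow> (nat \<Rightarrow> 'a) set" where
  "count_deviates L E n \<delta> = {\<omega> \<in> space (PiM {1..n} (\<lambda>_. L)).
     \<delta> * (real n * measure L E) \<le> \<bar>count_in {1..n} E \<omega> - real n * measure L E\<bar>}"

lemma count_deviates_sets:
  "E \<in> sets L \<Longrightarrow> count_deviates L E n \<delta> \<in> sets (PiM {1..n} (\<lambda>_. L))"
  unfolding count_deviates_def by measurable

lemma count_deviates_tendsto_0:
  assumes L: "\<And>n. prob_space (L n)" and E: "\<And>n. E n \<in> sets (L n)"
    and mean: "filterlim (\<lambda>n. real n * measure (L n) (E n)) at_top sequentially" and \<delta>: "\<delta> > 0"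
  shows "(\<lambda>n. measure (PiM {1..n} (\<lambda>_. L n)) (count_deviates (L n) (E n) n \<delta>)) \<longlonglongrightarrow> 0"
proof (rule tendsto_sandwich[OF _ _ tendsto_const])
  let ?\<mu> = "\<lambda>n. real n * measure (L n) (E n)"
  show "(\<lambda>n. inverse (\<delta>\<^sup>2 * ?\<mu> n)) \<longlonglongrightarrow> 0"
    using \<delta> by (intro tendsto_inverse_0_at_top filterlim_tendsto_pos_mult_at_top[OF tendsto_const _ mean]) simp
  have "\<forall>\<^sub>F n in sequentially. 0 < ?\<mu> n"
    using mean by (simp add: filterlim_at_top_dense)
  then show "\<forall>\<^sub>F n in sequentially.
      measure (PiM {1..n} (\<lambda>_. L n)) (count_deviates (L n) (E n) n \<delta>) \<le> inverse (\<delta>\<^sup>2 * ?\<mu> n)"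
  proof eventually_elim
    case (elim n)
    have "measure (PiM {1..n} (\<lambda>_. L n)) (count_deviates (L n) (E n) n \<delta>) \<le> ?\<mu> n / (\<delta> * ?\<mu> n)\<^sup>2"
      using count_in_Chebyshev_iid[OF L E _ mult_pos_pos[OF \<delta> elim], of "{1..n}"]
      by (simp add: count_deviates_def)
    also have "\<dots> = inverse (\<delta>\<^sup>2 * ?\<mu> n)"
      using elim \<delta> by (simp add: power2_eq_square field_simps)
    finally show ?case .
  qed
qed simp

lemma count_in_close:
  "\<omega> \<in> space (PiM {1..n} (\<lambda>_. L)) \<Longrightarrow> \<omega> \<notin> count_deviates L E n \<delta> \<Longrightarrow>
    \<bar>count_in {1..n} E \<omega> - real n * measure L E\<bar> < \<delta> * (real n * measure L E)"
  by (auto simp: count_deviates_def)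

section \<open>Convergence in probability of sample counts\<close>

lemma conv_probI_exceptional:
  assumes fin: "\<And>n. finite_measure (M n)"
    and exc: "\<And>e. e > 0 \<Longrightarrow> \<exists>B. (\<forall>n. B n \<in> sets (M n)) \<and> (\<lambda>n. measure (M n) (B n)) \<longlonglongrightarrow> 0
        \<and> (\<forall>\<^sub>F n in sequentially. \<forall>\<omega>\<in>space (M n). e < \<bar>W n \<omega> - c\<bar> \<longrightarrow> \<omega> \<in> B n)"
  shows "conv_prob M W c"
  unfolding conv_prob_def
proof (intro allI impI)
  fix e :: real assume "e > 0"
  then obtain B where B: "\<And>n. B n \<in> sets (M n)" and lim: "(\<lambda>n. measure (M n) (B n)) \<longlonglongrightarrow> 0"
    and ev: "\<forall>\<^sub>F n in sequentially. \<forall>\<omega>\<in>space (M n). e < \<bar>W n \<omega> - c\<bar> \<longrightarrow> \<omega> \<in> B n"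
    using exc by blast
  have le: "\<forall>\<^sub>F n in sequentially.
      measure (M n) {\<omega> \<in> space (M n). e < \<bar>W n \<omega> - c\<bar>} \<le> measure (M n) (B n)"
    using ev
  proof eventually_elim
    case (elim n)
    show ?case
    proof (cases "{\<omega> \<in> space (M n). e < \<bar>W n \<omega> - c\<bar>} \<in> sets (M n)")
      case True
      then show ?thesis
        using elim B by (intro finite_measure.finite_measure_mono[OF fin]) auto
    next
      case False
      then show ?thesis by (simp add: measure_notin_sets)
    qed
  qed
  show "(\<lambda>n. measure (M n) {\<omega> \<in> space (M n). e < \<bar>W n \<omega> - c\<bar>}) \<longlonglongrightarrow> 0"
    by (rule tendsto_sandwich[OF _ le tendsto_const lim]) simp
qed

lemma measure_Un_tendsto_0:
  assumes "\<And>n. finite_measure (M n)" "\<And>n. A n \<in> sets (M n)" "\<And>n. B n \<in> sets (M n)"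
    and "(\<lambda>n. measure (M n) (A n)) \<longlonglongrightarrow> 0" "(\<lambda>n. measure (M n) (B n)) \<longlonglongrightarrow> 0"
  shows "(\<lambda>n. measure (M n) (A n \<union> B n)) \<longlonglongrightarrow> 0"
proof (rule tendsto_sandwich[OF _ _ tendsto_const tendsto_add_zero[OF assms(4,5)]])
  show "\<forall>\<^sub>F n in sequentially. measure (M n) (A n \<union> B n) \<le> measure (M n) (A n) + measure (M n) (B n)"
    using assms(2,3) by (intro always_eventually allI measure_Un_le)
qed simp

lemma abs_pinv_mult_minus_less:
  fixes x y \<mu> q \<delta> :: real
  assumes \<mu>: "\<mu> > 0" and q: "0 \<le> q" "q \<le> 1" and \<delta>: "\<delta> \<le> 1/2"
    and x: "\<bar>x - \<mu>\<bar> < \<delta> * \<mu>" and y: "\<bar>y - q * \<mu>\<bar> < \<delta> * \<mu>"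
  shows "\<bar>pinv x * y - q\<bar> < 4 * \<delta>"
proof -
  have "\<delta> * \<mu> \<le> \<mu> / 2"
    using mult_right_mono[OF \<delta>, of \<mu>] \<mu> by simp
  then have x_half: "\<mu> / 2 < x"
    using x by (simp add: abs_less_iff)
  have "\<bar>y - q * x\<bar> = \<bar>(y - q * \<mu>) + q * (\<mu> - x)\<bar>"
    by (simp add: algebra_simps)
  also have "\<dots> \<le> \<bar>y - q * \<mu>\<bar> + q * \<bar>\<mu> - x\<bar>"
    using abs_triangle_ineq[of "y - q * \<mu>" "q * (\<mu> - x)"] q by (simp add: abs_mult)
  also have "\<dots> < 2 * \<delta> * \<mu>"
    using x y q mult_left_le_one_le[of "\<bar>\<mu> - x\<bar>" q] by (simp add: abs_minus_commute)
  also have "\<dots> \<le> 4 * \<delta> * x"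
  proof -
    have "0 < \<delta> * \<mu>"
      using x by linarith
    then have "0 < \<delta>"
      using \<mu> by (simp add: zero_less_mult_iff)
    then show ?thesis
      using mult_left_mono[of \<mu> "2 * x" "2 * \<delta>"] x_half by simp
  qed
  finally have "\<bar>y - q * x\<bar> < 4 * \<delta> * x" .
  moreover have "pinv x * y - q = (y - q * x) / x"
    using x_half \<mu> by (simp add: pinv_def field_simps)
  ultimately show ?thesis
    using x_half \<mu> by (simp add: pos_divide_less_eq)
qed

locale iid_counts =
  fixes L :: "nat \<Rightarrow> 'a measure" and E :: "nat \<Rightarrow> 'a set"
    and B :: "nat \<Rightarrow> (nat \<Rightarrow> 'a) set" and k :: "nat \<Rightarrow> (nat \<Rightarrow> 'a) \<Rightarrow> real"
  assumes prob_space_L: "\<And>n. prob_space (L n)"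
    and E_sets: "\<And>n. E n \<in> sets (L n)"
    and mean_at_top: "filterlim (\<lambda>n. real n * measure (L n) (E n)) at_top sequentially"
    and B_sets: "\<And>n. B n \<in> sets (PiM {1..n} (\<lambda>_. L n))"
    and B_tendsto_0: "(\<lambda>n. measure (PiM {1..n} (\<lambda>_. L n)) (B n)) \<longlonglongrightarrow> 0"
    and k_eq_count_in: "\<And>n \<omega>. \<omega> \<in> space (PiM {1..n} (\<lambda>_. L n)) \<Longrightarrow> \<omega> \<notin> B n \<Longrightarrow>
      k n \<omega> = count_in {1..n} (E n) \<omega>"
begin

abbreviation sample :: "nat \<Rightarrow> (nat \<Rightarrow> 'a) measure" where
  "sample n \<equiv> PiM {1..n} (\<lambda>_. L n)"

abbreviation mean :: "nat \<Rightarrow> real" where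
  "mean n \<equiv> real n * measure (L n) (E n)"

lemma finite_measure_sample: "finite_measure (sample n)"
  using prob_space_PiM[of "{1..n}" "\<lambda>_. L n"] prob_space_L by (simp add: prob_space_def)

lemma exceptional_tendsto_0:
  assumes "\<delta> > 0"
  shows "(\<lambda>n. measure (sample n) (B n \<union> count_deviates (L n) (E n) n \<delta>)) \<longlonglongrightarrow> 0"
  by (intro measure_Un_tendsto_0 finite_measure_sample B_sets count_deviates_sets E_sets
      B_tendsto_0 count_deviates_tendsto_0 prob_space_L mean_at_top assms)

lemma k_close:
  assumes "\<omega> \<in> space (sample n)" "\<omega> \<notin> B n \<union> count_deviates (L n) (E n) n \<delta>"
  shows "\<bar>k n \<omega> - mean n\<bar> < \<delta> * mean n" and "0 \<le> k n \<omega>"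
proof -
  have "\<omega> \<notin> B n" "\<omega> \<notin> count_deviates (L n) (E n) n \<delta>"
    using assms(2) by auto
  then show "\<bar>k n \<omega> - mean n\<bar> < \<delta> * mean n" "0 \<le> k n \<omega>"
    using count_in_close[OF assms(1)] k_eq_count_in[OF assms(1)] by (auto simp: count_in_def)
qed

lemma conv_probI_off_exceptional:
  assumes "\<And>e. e > 0 \<Longrightarrow> \<exists>\<delta>>0. \<forall>\<^sub>F n in sequentially. \<forall>\<omega>\<in>space (sample n).
      e < \<bar>W n \<omega> - c\<bar> \<longrightarrow> \<omega> \<in> B n \<union> count_deviates (L n) (E n) n \<delta>"
  shows "conv_prob sample W c"
proof (rule conv_probI_exceptional[OF finite_measure_sample])
  fix e :: real assume "e > 0"
  then obtain \<delta> where \<delta>: "\<delta> > 0" and ev: "\<forall>\<^sub>F n in sequentially. \<forall>\<omega>\<in>space (sample n).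
      e < \<bar>W n \<omega> - c\<bar> \<longrightarrow> \<omega> \<in> B n \<union> count_deviates (L n) (E n) n \<delta>"
    using assms by blast
  show "\<exists>D. (\<forall>n. D n \<in> sets (sample n)) \<and> (\<lambda>n. measure (sample n) (D n)) \<longlonglongrightarrow> 0 \<and>
      (\<forall>\<^sub>F n in sequentially. \<forall>\<omega>\<in>space (sample n). e < \<bar>W n \<omega> - c\<bar> \<longrightarrow> \<omega> \<in> D n)"
  proof (intro exI conjI allI)
    show "B n \<union> count_deviates (L n) (E n) n \<delta> \<in> sets (sample n)" for n
      by (intro sets.Un B_sets count_deviates_sets E_sets)
    show "(\<lambda>n. measure (sample n) (B n \<union> count_deviates (L n) (E n) n \<delta>)) \<longlonglongrightarrow> 0"
      by (rule exceptional_tendsto_0[OF \<delta>])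
  qed (rule ev)
qed

lemma conv_prob_pinv: "conv_prob sample (\<lambda>n \<omega>. pinv (k n \<omega>)) 0"
proof (rule conv_probI_off_exceptional)
  fix e :: real assume e: "e > 0"
  have "\<forall>\<^sub>F n in sequentially. 2 / e < mean n"
    using mean_at_top by (simp add: filterlim_at_top_dense)
  then have "\<forall>\<^sub>F n in sequentially. \<forall>\<omega>\<in>space (sample n).
      e < \<bar>pinv (k n \<omega>) - 0\<bar> \<longrightarrow> \<omega> \<in> B n \<union> count_deviates (L n) (E n) n (1/2)"
  proof eventually_elim
    case (elim n)
    show ?case
    proof (intro ballI impI; rule ccontr)
      fix \<omega> assume \<omega>: "\<omega> \<in> space (sample n)" and big: "e < \<bar>pinv (k n \<omega>) - 0\<bar>"
        and "\<omega> \<notin> B n \<union> count_deviates (L n) (E n) n (1/2)"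
      then have "\<bar>k n \<omega> - mean n\<bar> < mean n / 2"
        using k_close(1) by fastforce
      then have "mean n / 2 < k n \<omega>"
        unfolding abs_less_iff by linarith
      moreover have "1 / e < mean n / 2"
        using elim e by (simp add: field_simps)
      ultimately have inv_less: "1 / e < k n \<omega>"
        by linarith
      have "0 < 1 / e"
        using e by simp
      then have k_pos: "0 < k n \<omega>"
        using inv_less by linarith
      then have "\<bar>pinv (k n \<omega>) - 0\<bar> = 1 / k n \<omega>"
        by (simp add: pinv_def)
      moreover have "1 / k n \<omega> < e"
        using inv_less k_pos e by (simp add: field_simps)
      ultimately show False
        using big by linarith
    qed
  qed
  then show "\<exists>\<delta>>0. \<forall>\<^sub>F n in sequentially. \<forall>\<omega>\<in>space (sample n).
      e < \<bar>pinv (k n \<omega>) - 0\<bar> \<longrightarrow> \<omega> \<in> B n \<union> count_deviates (L n) (E n) n \<delta>"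
    by (intro exI[of _ "1/2"]) simp
qed

lemma conv_prob_sqrt_mult:
  assumes m: "\<And>n. 0 \<le> m n" and lim: "(\<lambda>n. sqrt (mean n) * m n) \<longlonglongrightarrow> 0"
  shows "conv_prob sample (\<lambda>n \<omega>. sqrt (k n \<omega>) * m n) 0"
proof (rule conv_probI_off_exceptional)
  fix e :: real assume e: "e > 0"
  have "(\<lambda>n. sqrt (3/2) * (sqrt (mean n) * m n)) \<longlonglongrightarrow> 0"
    using tendsto_mult_right_zero[OF lim] .
  then have "\<forall>\<^sub>F n in sequentially. sqrt (3/2) * (sqrt (mean n) * m n) < e"
    using e by (rule order_tendstoD(2))
  then have "\<forall>\<^sub>F n in sequentially. \<forall>\<omega>\<in>space (sample n).
      e < \<bar>sqrt (k n \<omega>) * m n - 0\<bar> \<longrightarrow> \<omega> \<in> B n \<union> count_deviates (L n) (E n) n (1/2)"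
  proof eventually_elim
    case (elim n)
    show ?case
    proof (intro ballI impI; rule ccontr)
      fix \<omega> assume \<omega>: "\<omega> \<in> space (sample n)" and big: "e < \<bar>sqrt (k n \<omega>) * m n - 0\<bar>"
        and off: "\<omega> \<notin> B n \<union> count_deviates (L n) (E n) n (1/2)"
      have k: "0 \<le> k n \<omega>" "k n \<omega> \<le> 3/2 * mean n"
        using k_close[OF \<omega> off] unfolding abs_less_iff by linarith+
      then have "sqrt (k n \<omega>) \<le> sqrt (3/2) * sqrt (mean n)"
        by (simp flip: real_sqrt_mult)
      then have "sqrt (k n \<omega>) * m n \<le> sqrt (3/2) * sqrt (mean n) * m n"
        by (rule mult_right_mono) (rule m)
      also have "\<dots> = sqrt (3/2) * (sqrt (mean n) * m n)"
        by (simp add: mult.assoc)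
      finally have "sqrt (k n \<omega>) * m n \<le> sqrt (3/2) * (sqrt (mean n) * m n)" .
      moreover have "\<bar>sqrt (k n \<omega>) * m n - 0\<bar> = sqrt (k n \<omega>) * m n"
        using k m[of n] by simp
      ultimately show False
        using big elim by linarith
    qed
  qed
  then show "\<exists>\<delta>>0. \<forall>\<^sub>F n in sequentially. \<forall>\<omega>\<in>space (sample n).
      e < \<bar>sqrt (k n \<omega>) * m n - 0\<bar> \<longrightarrow> \<omega> \<in> B n \<union> count_deviates (L n) (E n) n \<delta>"
    by (intro exI[of _ "1/2"]) simp
qed

lemma ratio_close:
  assumes q: "0 < q" "q \<le> 1" and \<delta>: "\<delta> \<le> 1/2" and mean: "0 < mean n"
    and F_measure: "measure (L n) (F n) = q * measure (L n) (E n)"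
    and \<omega>: "\<omega> \<in> space (sample n)" "\<omega> \<notin> B n \<union> count_deviates (L n) (E n) n \<delta>"
      "\<omega> \<notin> count_deviates (L n) (F n) n (\<delta> / q)"
    and s: "s = count_in {1..n} (F n) \<omega>"
  shows "\<bar>pinv (k n \<omega>) * s - q\<bar> < 4 * \<delta>"
proof -
  have F_mean: "real n * measure (L n) (F n) = q * mean n"
    by (simp add: F_measure algebra_simps)
  have "\<bar>s - q * mean n\<bar> < \<delta> / q * (q * mean n)"
    using count_in_close[OF \<omega>(1,3)] unfolding s F_mean .
  also have "\<dots> = \<delta> * mean n"
    using q(1) by simp
  finally have "\<bar>s - q * mean n\<bar> < \<delta> * mean n" .
  then show ?thesis
    using abs_pinv_mult_minus_less[OF mean _ q(2) \<delta> k_close(1)[OF \<omega>(1,2)]] q(1) by simp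
qed

lemma conv_prob_ratio:
  assumes F: "\<And>n. F n \<in> sets (L n)" and q: "0 < q" "q \<le> 1"
    and F_measure: "\<And>n. measure (L n) (F n) = q * measure (L n) (E n)"
    and s: "\<And>n \<omega>. \<omega> \<in> space (sample n) \<Longrightarrow> \<omega> \<notin> B n \<Longrightarrow> s n \<omega> = count_in {1..n} (F n) \<omega>"
  shows "conv_prob sample (\<lambda>n \<omega>. pinv (k n \<omega>) * s n \<omega>) q"
proof (rule conv_probI_exceptional[OF finite_measure_sample])
  fix e :: real assume e: "e > 0"
  define \<delta> where "\<delta> = min (1/2) (e/4)"
  have \<delta>: "0 < \<delta>" "\<delta> \<le> 1/2" "4 * \<delta> \<le> e"
    using e by (auto simp: \<delta>_def)
  have "filterlim (\<lambda>n. q * mean n) at_top sequentially"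
    using q by (intro filterlim_tendsto_pos_mult_at_top[OF tendsto_const _ mean_at_top])
  then have F_mean: "filterlim (\<lambda>n. real n * measure (L n) (F n)) at_top sequentially"
    by (simp add: F_measure mult.left_commute)
  define D where "D n = (B n \<union> count_deviates (L n) (E n) n \<delta>) \<union> count_deviates (L n) (F n) n (\<delta> / q)"
    for n
  have D_sets: "D n \<in> sets (sample n)" for n
    unfolding D_def by (intro sets.Un B_sets count_deviates_sets E_sets F)
  have D_tendsto_0: "(\<lambda>n. measure (sample n) (D n)) \<longlonglongrightarrow> 0"
    unfolding D_def using \<delta>(1) q(1)
    by (intro measure_Un_tendsto_0[OF finite_measure_sample] sets.Un B_sets count_deviates_sets E_sets F
        exceptional_tendsto_0 count_deviates_tendsto_0[OF prob_space_L F F_mean]) simp_all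
  have "\<forall>\<^sub>F n in sequentially. 0 < mean n"
    using mean_at_top by (simp add: filterlim_at_top_dense)
  then have D_covers: "\<forall>\<^sub>F n in sequentially. \<forall>\<omega>\<in>space (sample n).
      e < \<bar>pinv (k n \<omega>) * s n \<omega> - q\<bar> \<longrightarrow> \<omega> \<in> D n"
  proof eventually_elim
    case (elim n)
    show ?case
    proof (intro ballI impI; rule ccontr)
      fix \<omega> assume \<omega>: "\<omega> \<in> space (sample n)" and "\<omega> \<notin> D n"
      then have "\<bar>pinv (k n \<omega>) * s n \<omega> - q\<bar> < 4 * \<delta>"
        by (intro ratio_close[where F = F, OF q \<delta>(2) elim F_measure \<omega>] s) (auto simp: D_def)
      then show "e < \<bar>pinv (k n \<omega>) * s n \<omega> - q\<bar> \<Longrightarrow> False"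
        using \<delta>(3) by linarith
    qed
  qed
  show "\<exists>D. (\<forall>n. D n \<in> sets (sample n)) \<and> (\<lambda>n. measure (sample n) (D n)) \<longlonglongrightarrow> 0 \<and>
      (\<forall>\<^sub>F n in sequentially. \<forall>\<omega>\<in>space (sample n). e < \<bar>pinv (k n \<omega>) * s n \<omega> - q\<bar> \<longrightarrow> \<omega> \<in> D n)"
    by (intro exI[of _ D] conjI allI D_sets D_tendsto_0 D_covers)
qed

end

section \<open>The matching design\<close>

lemma card_mult_le_measure_Union:
  assumes C: "finite C" "disjoint C" "C \<subseteq> sets M" and fin: "emeasure M (\<Union>C) < \<infinity>"
    and c: "\<And>a. a \<in> C \<Longrightarrow> c \<le> measure M a"
  shows "real (card C) * c \<le> measure M (\<Union>C)"
proof -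
  have "a \<in> fmeasurable M" if "a \<in> C" for a
  proof -
    have "emeasure M a \<le> emeasure M (\<Union>C)"
      using that C by (intro emeasure_mono) auto
    then show ?thesis
      using that C fin by (auto simp: fmeasurable_def)
  qed
  then have "measure M (\<Union>C) = (\<Sum>a\<in>C. measure M a)"
    using C by (intro measure_Union') (auto simp: disjoint_def pairwise_def disjnt_def)
  moreover have "real (card C) * c \<le> (\<Sum>a\<in>C. measure M a)"
    using c by (intro sum_bounded_below) auto
  ultimately show ?thesis by simp
qed

lemma integral_indicator_density_ge:
  assumes D: "D = density \<nu> (\<lambda>x. ennreal (f x))"
    and f: "f \<in> borel_measurable \<nu>" "\<And>x. 0 \<le> f x"
    and g: "g \<in> borel_measurable \<nu>" "integrable D g"
    and a: "a \<in> sets \<nu>" "emeasure \<nu> a < \<infinity>"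
    and c: "AE x in \<nu>. x \<in> a \<longrightarrow> c \<le> f x * g x"
  shows "c * measure \<nu> a \<le> (\<integral>x. indicator a x * g x \<partial>D)"
proof -
  have h: "(\<lambda>x. indicator a x * g x :: real) \<in> borel_measurable \<nu>"
    using a g by measurable
  have "a \<in> sets D"
    using a(1) D by simp
  then have "integrable D (\<lambda>x. indicator a x * g x)"
    using integrable_mult_indicator[OF _ g(2)] by simp
  then have "integrable \<nu> (\<lambda>x. f x *\<^sub>R (indicator a x * g x))"
    unfolding D by (rule integrable_density[THEN iffD1, rotated 3]) (use f h in auto)
  moreover have "integrable \<nu> (\<lambda>x. c * indicator a x)"
    using a by (intro integrable_mult_right) (simp add: integrable_indicator_iff sets.Int_space_eq2)
  ultimately have "(\<integral>x. c * indicator a x \<partial>\<nu>) \<le> (\<integral>x. f x * (indicator a x * g x) \<partial>\<nu>)"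
    using c by (intro integral_mono_AE) (auto elim!: eventually_mono simp: indicator_def)
  also have "\<dots> = (\<integral>x. indicator a x * g x \<partial>D)"
    unfolding D using f h by (subst integral_density) auto
  finally show ?thesis
    using a by (simp add: sets.Int_space_eq2)
qed

lemma borel_measurable_fst_borel [measurable]:
  "(fst :: 'a::topological_space \<times> 'b::topological_space \<Rightarrow> 'a) \<in> borel_measurable borel"
  by (intro borel_measurable_continuous_onI continuous_intros)

lemma borel_measurable_snd_borel [measurable]:
  "(snd :: 'a::topological_space \<times> 'b::topological_space \<Rightarrow> 'b) \<in> borel_measurable borel"
  by (intro borel_measurable_continuous_onI continuous_intros)

lemma measure_fst_ge_density_bound:
  fixes Q :: "('a::second_countable_topology \<times> 'b::second_countable_topology) measure"
  assumes Q: "prob_space Q" "sets Q = sets borel"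
    and dens: "distr Q borel fst = density \<nu> (\<lambda>x. ennreal (f x))"
    and \<nu>: "sets \<nu> = sets borel" and f: "f \<in> borel_measurable borel" "\<And>x. 0 \<le> f x"
    and g: "integrable (distr Q borel fst) g"
    and g_cond: "\<And>B. B \<in> sets borel \<Longrightarrow>
      measure Q {w \<in> space Q. fst w \<in> B \<and> Y w} = (\<integral>x. indicator B x * g x \<partial>distr Q borel fst)"
    and a: "a \<in> sets borel" "a \<subseteq> X" and X: "X \<in> sets borel" "emeasure \<nu> X < \<infinity>"
    and c: "AE x in \<nu>. x \<in> X \<longrightarrow> c \<le> f x * g x"
  shows "c * measure \<nu> a \<le> measure Q {w \<in> space Q. fst w \<in> a}"
proof -
  interpret Q: prob_space Q by fact
  have g_borel: "g \<in> borel_measurable borel"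
    using borel_measurable_integrable[OF g] by simp
  have "f \<in> borel_measurable \<nu>" "g \<in> borel_measurable \<nu>"
    unfolding measurable_cong_sets[OF \<nu> refl] by (fact f(1) g_borel)+
  moreover have "a \<in> sets \<nu>"
    using a(1) \<nu> by simp
  moreover have "emeasure \<nu> a < \<infinity>"
  proof -
    have "emeasure \<nu> a \<le> emeasure \<nu> X"
      using a(2) X(1) \<nu> by (intro emeasure_mono) auto
    then show ?thesis
      using X(2) by (rule le_less_trans)
  qed
  moreover have "AE x in \<nu>. x \<in> a \<longrightarrow> c \<le> f x * g x"
    using c by eventually_elim (use a(2) in auto)
  ultimately have "c * measure \<nu> a \<le> (\<integral>x. indicator a x * g x \<partial>distr Q borel fst)"
    using f(2) g by (intro integral_indicator_density_ge[OF dens])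
  also have "\<dots> = measure Q {w \<in> space Q. fst w \<in> a \<and> Y w}"
    by (rule g_cond[OF a(1), symmetric])
  also have "\<dots> \<le> measure Q {w \<in> space Q. fst w \<in> a}"
  proof (rule Q.finite_measure_mono)
    show "{w \<in> space Q. fst w \<in> a} \<in> sets Q"
      using a(1) unfolding sets_eq_imp_space_eq[OF Q(2)] Q(2) by measurable
  qed auto
  finally show ?thesis .
qed

lemma mesh_nonneg:
  assumes "finite A" "\<And>a. a \<in> A \<Longrightarrow> bounded a"
  shows "0 \<le> mesh A"
proof (cases "A = {}")
  case False
  then obtain a where a: "a \<in> A" by blast
  have "0 \<le> diameter a"
    using assms(2)[OF a] by (rule diameter_ge_0)
  also have "\<dots> \<le> Max (diameter ` A)"
    using assms(1) a by (intro Max_ge) auto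
  finally show ?thesis
    using False by (simp add: mesh_def)
qed (simp add: mesh_def)

locale matching_design =
  fixes P :: "nat \<Rightarrow> ('x::euclidean_space) unit_rec measure"
    and Q :: "bool \<Rightarrow> ('x \<times> real \<times> real) measure"
    and \<X> :: "'x set" and A :: "nat \<Rightarrow> 'x set set" and \<tau> :: real
  assumes P_prob: "\<And>n. prob_space (P n)"
    and P_sets: "\<And>n. sets (P n) = sets (count_space UNIV \<Otimes>\<^sub>M borel)"
    and Q_prob: "\<And>z. prob_space (Q z)"
    and Q_sets: "\<And>z. sets (Q z) = sets borel"
    and cond_law: "\<And>n z B. B \<in> sets borel \<Longrightarrow>
      measure (P n) {v \<in> space (P n). Zv v = z \<and> snd v \<in> B}
        = measure (P n) {v \<in> space (P n). Zv v = z} * measure (Q z) B"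
    and A_fin: "\<And>n. finite (A n)"
    and A_meas: "\<And>n a. a \<in> A n \<Longrightarrow> a \<in> sets borel"
    and A_cover: "\<And>n. \<Union> (A n) = \<X>"
begin

abbreviation prop_treated :: "nat \<Rightarrow> real" where
  "prop_treated n \<equiv> measure (P n) {v \<in> space (P n). Zv v}"

definition treated :: "nat \<Rightarrow> 'x unit_rec set" where
  "treated n = {v \<in> space (P n). Zv v \<and> Xv v \<in> \<X>}"

definition treated_at_risk :: "nat \<Rightarrow> 'x unit_rec set" where
  "treated_at_risk n = {v \<in> space (P n). Zv v \<and> Xv v \<in> \<X> \<and> \<tau> \<le> Ttil v}"

definition controls_in :: "nat \<Rightarrow> 'x set \<Rightarrow> 'x unit_rec set" where
  "controls_in n a = {v \<in> space (P n). \<not> Zv v \<and> Xv v \<in> a}"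

definition cell_without_control :: "nat \<Rightarrow> (nat \<Rightarrow> 'x unit_rec) set" where
  "cell_without_control n = (\<Union>a\<in>A n.
     {\<omega> \<in> space (PiM {1..n} (\<lambda>_. P n)). \<forall>j\<in>{1..n}. \<omega> j \<notin> controls_in n a})"

lemma space_P: "space (P n) = UNIV"
  using sets_eq_imp_space_eq[OF P_sets[of n]] by (simp add: space_pair_measure)

lemma space_Q: "space (Q z) = UNIV"
  using sets_eq_imp_space_eq[OF Q_sets[of z]] by simp

lemma X_sets [measurable]: "\<X> \<in> sets borel"
  using A_fin[of 0] A_meas[of _ 0] by (auto simp flip: A_cover[of 0])

lemma unit_event_sets:
  assumes "B \<in> sets borel"
  shows "{v \<in> space (P n). Zv v = z \<and> snd v \<in> B} \<in> sets (P n)"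
proof -
  have [measurable_cong]: "sets (P n) = sets (count_space UNIV \<Otimes>\<^sub>M (borel :: ('x \<times> real \<times> real) measure))"
    by (rule P_sets)
  show ?thesis
    using assms unfolding Zv_def by measurable
qed

lemma treated_eq: "treated n = {v \<in> space (P n). Zv v = True \<and> snd v \<in> {w. fst w \<in> \<X>}}"
  by (auto simp: treated_def Xv_def)

lemma treated_at_risk_eq:
  "treated_at_risk n = {v \<in> space (P n). Zv v = True \<and>
     snd v \<in> {w. fst w \<in> \<X> \<and> \<tau> \<le> min (fst (snd w)) (snd (snd w))}}"
  by (auto simp: treated_at_risk_def Xv_def Ttil_def Tv_def Uv_def)

lemma controls_in_eq: "controls_in n a = {v \<in> space (P n). Zv v = False \<and> snd v \<in> {w. fst w \<in> a}}"
  by (auto simp: controls_in_def Xv_def)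

lemma treated_sets: "treated n \<in> sets (P n)"
  unfolding treated_eq by (intro unit_event_sets) measurable

lemma treated_at_risk_sets: "treated_at_risk n \<in> sets (P n)"
  unfolding treated_at_risk_eq by (intro unit_event_sets) measurable

lemma controls_in_sets:
  assumes "a \<in> A n"
  shows "controls_in n a \<in> sets (P n)"
proof -
  have [measurable]: "a \<in> sets borel"
    using A_meas[OF assms] .
  show ?thesis
    unfolding controls_in_eq by (intro unit_event_sets) measurable
qed

lemma measure_treated:
  "measure (P n) (treated n) = prop_treated n * measure (Q True) {w \<in> space (Q True). fst w \<in> \<X>}"
  unfolding treated_eq using cond_law[of "{w. fst w \<in> \<X>}" n True]
  by (simp add: space_Q)

lemma measure_treated_at_risk:
  "measure (P n) (treated_at_risk n) = prop_treated n *
     measure (Q True) {w \<in> space (Q True). fst w \<in> \<X> \<and> \<tau> \<le> min (fst (snd w)) (snd (snd w))}"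
  unfolding treated_at_risk_eq
  using cond_law[of "{w. fst w \<in> \<X> \<and> \<tau> \<le> min (fst (snd w)) (snd (snd w))}" n True]
  by (simp add: space_Q)

lemma measure_controls_in:
  assumes "a \<in> A n"
  shows "measure (P n) (controls_in n a) = (1 - prop_treated n) * measure (Q False) {w \<in> space (Q False). fst w \<in> a}"
proof -
  interpret prob_space "P n" by (rule P_prob)
  have "{v \<in> space (P n). Zv v = False} = space (P n) - {v \<in> space (P n). Zv v}"
    by auto
  moreover have "{v \<in> space (P n). Zv v} \<in> sets (P n)"
    using unit_event_sets[of UNIV n True] by simp
  ultimately have "measure (P n) {v \<in> space (P n). Zv v = False} = 1 - prop_treated n"
    by (simp add: prob_compl)
  then show ?thesis
    unfolding controls_in_eq using cond_law[of "{w. fst w \<in> a}" n False] A_meas[OF assms]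
    by (simp add: space_Q)
qed

lemma cell_without_control_sets: "cell_without_control n \<in> sets (PiM {1..n} (\<lambda>_. P n))"
  unfolding cell_without_control_def
proof (intro sets.finite_UN A_fin sets.sets_Collect_finite_All finite_atLeastAtMost)
  fix a j assume "a \<in> A n" "j \<in> {1..n}"
  then show "{\<omega> \<in> space (PiM {1..n} (\<lambda>_. P n)). \<omega> j \<notin> controls_in n a} \<in> sets (PiM {1..n} (\<lambda>_. P n))"
    using controls_in_sets[of a n] by measurable
qed

lemma G1_eq_treated:
  assumes "\<omega> \<in> space (PiM {1..n} (\<lambda>_. P n))" "\<omega> \<notin> cell_without_control n"
  shows "G1 (A n) n \<omega> = {i \<in> {1..n}. \<omega> i \<in> treated n}"
proof
  show "G1 (A n) n \<omega> \<subseteq> {i \<in> {1..n}. \<omega> i \<in> treated n}"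
    using A_cover[of n] by (auto simp: G1_def treated_def space_P)
  show "{i \<in> {1..n}. \<omega> i \<in> treated n} \<subseteq> G1 (A n) n \<omega>"
  proof
    fix i assume i: "i \<in> {i \<in> {1..n}. \<omega> i \<in> treated n}"
    then obtain a where a: "a \<in> A n" "Xv (\<omega> i) \<in> a"
      using A_cover[of n] by (auto simp: treated_def)
    then obtain j where "j \<in> {1..n}" "\<omega> j \<in> controls_in n a"
      using assms unfolding cell_without_control_def by blast
    then show "i \<in> G1 (A n) n \<omega>"
      using i a by (auto simp: G1_def treated_def controls_in_def)
  qed
qed

lemma n1_eq_count_in:
  "\<omega> \<in> space (PiM {1..n} (\<lambda>_. P n)) \<Longrightarrow> \<omega> \<notin> cell_without_control n \<Longrightarrow>
    real (n1 (A n) n \<omega>) = count_in {1..n} (treated n) \<omega>"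
  by (simp add: n1_def count_in_def G1_eq_treated)

lemma sum_Yat_eq_count_in:
  assumes "\<omega> \<in> space (PiM {1..n} (\<lambda>_. P n))" "\<omega> \<notin> cell_without_control n"
  shows "(\<Sum>i\<in>G1 (A n) n \<omega>. Yat \<tau> (\<omega> i)) = count_in {1..n} (treated_at_risk n) \<omega>"
proof -
  have "(\<Sum>i\<in>G1 (A n) n \<omega>. Yat \<tau> (\<omega> i)) = (\<Sum>i\<in>{i \<in> {1..n}. \<omega> i \<in> treated n}. if \<tau> \<le> Ttil (\<omega> i) then 1 else 0)"
    by (simp add: G1_eq_treated[OF assms] Yat_def)
  also have "\<dots> = real (card {i \<in> {i \<in> {1..n}. \<omega> i \<in> treated n}. \<tau> \<le> Ttil (\<omega> i)})"
    by (simp add: sum.If_cases Int_def)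
  also have "{i \<in> {i \<in> {1..n}. \<omega> i \<in> treated n}. \<tau> \<le> Ttil (\<omega> i)} = {i \<in> {1..n}. \<omega> i \<in> treated_at_risk n}"
    by (auto simp: treated_def treated_at_risk_def)
  finally show ?thesis
    by (simp add: count_in_def)
qed

lemma measure_cell_without_control_le_exp:
  assumes treated: "prop_treated n \<le> 1/2"
    and mass: "\<And>a. a \<in> A n \<Longrightarrow> m \<le> measure (Q False) {w \<in> space (Q False). fst w \<in> a}"
  shows "measure (PiM {1..n} (\<lambda>_. P n)) (cell_without_control n)
    \<le> real (card (A n)) * exp (- (real n * (m / 2)))"
proof -
  have control_mass: "m / 2 \<le> measure (P n) (controls_in n a)" if a: "a \<in> A n" for a
  proof -
    have "m / 2 \<le> 1/2 * measure (Q False) {w \<in> space (Q False). fst w \<in> a}"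
      using mass[OF a] by simp
    also have "\<dots> \<le> (1 - prop_treated n) * measure (Q False) {w \<in> space (Q False). fst w \<in> a}"
      using treated by (intro mult_right_mono) auto
    finally show ?thesis
      by (simp add: measure_controls_in[OF a])
  qed
  have "measure (PiM {1..n} (\<lambda>_. P n))
      (\<Union>a\<in>A n. {\<omega> \<in> space (PiM {1..n} (\<lambda>_. P n)). \<forall>i\<in>{1..n}. \<omega> i \<notin> controls_in n a})
    \<le> real (card (A n)) * exp (- (real (card {1..n}) * (m / 2)))"
    by (rule measure_PiM_iid_some_missed_le[OF P_prob finite_atLeastAtMost A_fin controls_in_sets
          control_mass])
  then show ?thesis
    by (simp add: cell_without_control_def)
qed

lemma cell_without_control_tendsto_0:
  assumes treated_lim: "prop_treated \<longlonglongrightarrow> 0"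
    and \<nu>: "sets \<nu> = sets borel" "emeasure \<nu> \<X> < \<infinity>" and A_disj: "\<And>n. disjoint (A n)"
    and volume: "\<And>n a. n \<ge> 1 \<Longrightarrow> a \<in> A n \<Longrightarrow> c * real n powr (- s) \<le> measure \<nu> a"
    and mass: "\<And>n a. a \<in> A n \<Longrightarrow> \<kappa> * measure \<nu> a \<le> measure (Q False) {w \<in> space (Q False). fst w \<in> a}"
    and c: "0 < c" "0 < \<kappa>" and s: "0 < s" "s < 1"
  shows "(\<lambda>n. measure (PiM {1..n} (\<lambda>_. P n)) (cell_without_control n)) \<longlonglongrightarrow> 0"
proof (rule tendsto_sandwich[OF _ _ tendsto_const])
  define C where "C = measure \<nu> \<X> / c"
  show "(\<lambda>n. C * real n powr s * exp (- (real n * (\<kappa> * (c * real n powr (- s)) / 2)))) \<longlonglongrightarrow> 0"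
    using c s by real_asymp
  have "\<forall>\<^sub>F n in sequentially. prop_treated n \<le> 1/2"
    using order_tendstoD(2)[OF treated_lim, of "1/2"] by (auto elim: eventually_mono)
  with eventually_ge_at_top[of 1]
  show "\<forall>\<^sub>F n in sequentially. measure (PiM {1..n} (\<lambda>_. P n)) (cell_without_control n)
      \<le> C * real n powr s * exp (- (real n * (\<kappa> * (c * real n powr (- s)) / 2)))"
  proof eventually_elim
    case (elim n)
    have "real (card (A n)) * (c * real n powr (- s)) \<le> measure \<nu> (\<Union>(A n))"
      using A_fin A_disj A_meas \<nu> A_cover volume[OF elim(1)]
      by (intro card_mult_le_measure_Union) auto
    then have card: "real (card (A n)) \<le> C * real n powr s"
      using c elim(1) by (simp add: C_def A_cover powr_minus field_simps)
    have "\<kappa> * (c * real n powr (- s)) \<le> measure (Q False) {w \<in> space (Q False). fst w \<in> a}"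
      if "a \<in> A n" for a
      using mult_left_mono[OF volume[OF elim(1) that], of \<kappa>] mass[OF that] c by linarith
    then have "measure (PiM {1..n} (\<lambda>_. P n)) (cell_without_control n)
        \<le> real (card (A n)) * exp (- (real n * (\<kappa> * (c * real n powr (- s)) / 2)))"
      by (rule measure_cell_without_control_le_exp[OF elim(2)])
    also have "\<dots> \<le> C * real n powr s * exp (- (real n * (\<kappa> * (c * real n powr (- s)) / 2)))"
      using card by (intro mult_right_mono) auto
    finally show ?case .
  qed
qed simp

lemma mesh_A_nonneg:
  assumes "bounded \<X>"
  shows "0 \<le> mesh (A n)"
proof (rule mesh_nonneg[OF A_fin])
  fix a assume "a \<in> A n"
  then have "a \<subseteq> \<X>"
    using A_cover[of n] by blast
  then show "bounded a"
    by (rule bounded_subset[OF assms])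
qed

lemma prop_treated_tendsto_0:
  assumes upper: "\<And>n. n \<ge> 1 \<Longrightarrow> prop_treated n \<le> C * real n powr (\<beta> - 1)" and \<beta>: "\<beta> < 1"
  shows "prop_treated \<longlonglongrightarrow> 0"
proof (rule tendsto_sandwich[OF _ _ tendsto_const])
  show "(\<lambda>n. C * real n powr (\<beta> - 1)) \<longlonglongrightarrow> 0"
    using \<beta> by real_asymp
  show "\<forall>\<^sub>F n in sequentially. prop_treated n \<le> C * real n powr (\<beta> - 1)"
    using eventually_ge_at_top[of 1] by eventually_elim (rule upper)
qed simp

lemma treated_mean_at_top:
  assumes lower: "\<And>n. n \<ge> 1 \<Longrightarrow> c * real n powr (\<beta> - 1) \<le> prop_treated n"
    and X_pos: "0 < measure (Q True) {w \<in> space (Q True). fst w \<in> \<X>}"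
    and c: "0 < c" and \<beta>: "0 < \<beta>"
  shows "filterlim (\<lambda>n. real n * measure (P n) (treated n)) at_top sequentially"
proof -
  define r where "r = measure (Q True) {w \<in> space (Q True). fst w \<in> \<X>}"
  have r: "0 < r"
    using X_pos by (simp add: r_def)
  show ?thesis
  proof (rule filterlim_at_top_mono)
    show "filterlim (\<lambda>n. real n * (c * real n powr (\<beta> - 1)) * r) at_top sequentially"
      using c r \<beta> by real_asymp
    show "\<forall>\<^sub>F n in sequentially. real n * (c * real n powr (\<beta> - 1)) * r \<le> real n * measure (P n) (treated n)"
      using eventually_ge_at_top[of 1]
      by eventually_elim
        (use lower r in \<open>auto simp: measure_treated r_def mult.assoc intro!: mult_right_mono mult_left_mono\<close>)
  qed
qed

lemma sqrt_treated_mean_mult_mesh_tendsto_0: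
  assumes upper: "\<And>n. n \<ge> 1 \<Longrightarrow> prop_treated n \<le> C * real n powr (\<beta> - 1)"
    and mesh_bound: "\<And>n. n \<ge> 1 \<Longrightarrow> mesh (A n) \<le> D * real n powr (- \<theta>)"
    and X_bounded: "bounded \<X>" and C: "0 < C" and \<beta>: "0 < \<beta>" "\<beta> < 2 * \<theta>"
  shows "(\<lambda>n. sqrt (real n * measure (P n) (treated n)) * mesh (A n)) \<longlonglongrightarrow> 0"
proof (rule tendsto_sandwich[OF _ _ tendsto_const])
  have "(\<lambda>n. sqrt (C * real n powr \<beta>) * real n powr (- \<theta>)) \<longlonglongrightarrow> 0"
    using C \<beta> by real_asymp
  then show "(\<lambda>n. D * (sqrt (C * real n powr \<beta>) * real n powr (- \<theta>))) \<longlonglongrightarrow> 0"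
    by (rule tendsto_mult_right_zero)
  show "\<forall>\<^sub>F n in sequentially. sqrt (real n * measure (P n) (treated n)) * mesh (A n)
      \<le> D * (sqrt (C * real n powr \<beta>) * real n powr (- \<theta>))"
    using eventually_ge_at_top[of 1]
  proof eventually_elim
    case (elim n)
    have "measure (Q True) {w \<in> space (Q True). fst w \<in> \<X>} \<le> 1"
      by (rule prob_space.prob_le_1[OF Q_prob])
    then have "real n * measure (P n) (treated n) \<le> real n * prop_treated n"
      unfolding measure_treated by (intro mult_left_mono mult_left_le) auto
    also have "\<dots> \<le> real n * (C * real n powr (\<beta> - 1))"
      using upper[OF elim] by (intro mult_left_mono) auto
    also have "\<dots> = C * real n powr \<beta>"
      using powr_mult_base[of "real n" "\<beta> - 1"] by simp
    finally have "sqrt (real n * measure (P n) (treated n)) * mesh (A n)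
        \<le> sqrt (C * real n powr \<beta>) * (D * real n powr (- \<theta>))"
      using mesh_bound[OF elim] mesh_A_nonneg[OF X_bounded, of n] C by (intro mult_mono) auto
    then show ?case
      by (simp add: ac_simps)
  qed
qed (simp add: mesh_A_nonneg[OF X_bounded])

end

theorem mainTheorem15:
  fixes P :: "nat \<Rightarrow> ('x::euclidean_space) unit_rec measure"
    and Q :: "bool \<Rightarrow> ('x \<times> real \<times> real) measure"
    and \<nu> :: "'x measure"
    and f :: "bool \<Rightarrow> 'x \<Rightarrow> real"
    and g :: "'x \<Rightarrow> real"
    and \<X> :: "'x set"
    and A :: "nat \<Rightarrow> 'x set set"
    and \<tau> \<beta> \<theta> :: real
    and dbar :: nat
  assumes P_prob: "\<And>n. prob_space (P n)"
    and P_sets: "\<And>n. sets (P n) = sets (count_space UNIV \<Otimes>\<^sub>M borel)"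
    and Q_prob: "\<And>z. prob_space (Q z)"
    and Q_sets: "\<And>z. sets (Q z) = sets borel"
    \<comment> \<open>the conditional law of (X,T,U) given Z = z is Q z, for every n\<close>
    and cond_law: "\<And>n z B. B \<in> sets borel \<Longrightarrow>
        measure (P n) {v \<in> space (P n). Zv v = z \<and> snd v \<in> B}
          = measure (P n) {v \<in> space (P n). Zv v = z} * measure (Q z) B"
    \<comment> \<open>T > 0 and U > 0\<close>
    and TU_pos: "\<And>n. AE v in P n. Tv v > 0 \<and> Uv v > 0"
    and tau_pos: "\<tau> > 0"
    and X_compact: "compact \<X>"
    \<comment> \<open>[B1]\<close>
    and B1: "0 < \<beta>" "\<beta> < 1" "0 < \<theta>" "\<theta> < 1" "1 \<le> dbar" "dbar \<le> DIM('x)"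
            "\<beta> < 2 * \<theta>" "real dbar * \<theta> < 1"
    \<comment> \<open>[B2]\<close>
    and B2: "\<exists>c C. 0 < c \<and> 0 < C \<and> (\<forall>n\<ge>1.
         c * real n powr (\<beta> - 1) \<le> measure (P n) {v \<in> space (P n). Zv v} \<and>
         measure (P n) {v \<in> space (P n). Zv v} \<le> C * real n powr (\<beta> - 1))"
    \<comment> \<open>[B3]\<close>
    and nu_sets: "sets \<nu> = sets borel"
    and nu_sigma: "sigma_finite_measure \<nu>"
    and nu_X: "emeasure \<nu> \<X> < \<infinity>"
    and f_meas: "\<And>z. f z \<in> borel_measurable borel"
    and f_nonneg: "\<And>z x. 0 \<le> f z x"
    and f_dens: "\<And>z. distr (Q z) borel fst = density \<nu> (\<lambda>x. ennreal (f z x))"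
    and f1_esssup: "\<exists>C. AE x in \<nu>. x \<in> \<X> \<longrightarrow> f True x \<le> C"
    \<comment> \<open>g is a version of x \<mapsto> E[Y_\<tau> | X = x, Z = 0]\<close>
    and g_int: "integrable (distr (Q False) borel fst) g"
    and g_cond: "\<And>B. B \<in> sets borel \<Longrightarrow>
        measure (Q False) {w \<in> space (Q False). fst w \<in> B \<and> \<tau> \<le> min (fst (snd w)) (snd (snd w))}
          = (\<integral>x. indicator B x * g x \<partial>distr (Q False) borel fst)"
    and B3_essinf: "\<exists>c>0. AE x in \<nu>. x \<in> \<X> \<longrightarrow> c \<le> f False x * g x"
    \<comment> \<open>[B4]\<close>
    and B4a: "\<And>s. 0 \<le> s \<Longrightarrow> s \<le> \<tau> \<Longrightarrow>
        measure (Q True) {w \<in> space (Q True). min (fst (snd w)) (snd (snd w)) = s \<and> fst w \<in> \<X>} = 0"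
    and B4b: "measure (Q True) {w \<in> space (Q True). \<tau> \<le> min (fst (snd w)) (snd (snd w)) \<and> fst w \<in> \<X>} > 0"
    \<comment> \<open>A n is a finite measurable partition of \<X>\<close>
    and A_fin: "\<And>n. finite (A n)"
    and A_meas: "\<And>n a. a \<in> A n \<Longrightarrow> a \<in> sets borel"
    and A_disj: "\<And>n. disjoint (A n)"
    and A_cover: "\<And>n. \<Union> (A n) = \<X>"
    and A_nonempty: "\<And>n a. a \<in> A n \<Longrightarrow> a \<noteq> {}"
    \<comment> \<open>[B5]\<close>
    and B5_diam: "\<exists>C. \<forall>n\<ge>1. mesh (A n) \<le> C * real n powr (- \<theta>)"
    and B5_vol: "\<exists>c C. 0 < c \<and> 0 < C \<and> (\<forall>n\<ge>1. \<forall>a\<in>A n.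
         c * real n powr (- (real dbar * \<theta>)) \<le> measure \<nu> a \<and>
         measure \<nu> a \<le> C * real n powr (- (real dbar * \<theta>)))"
  shows "conv_prob (\<lambda>n. sample_space (P n) n) (\<lambda>n \<omega>. pinv (real (n1 (A n) n \<omega>))) 0
       \<and> conv_prob (\<lambda>n. sample_space (P n) n) (\<lambda>n \<omega>. sqrt (real (n1 (A n) n \<omega>)) * mesh (A n)) 0
       \<and> (let q = measure (Q True) {w \<in> space (Q True). fst w \<in> \<X> \<and> \<tau> \<le> min (fst (snd w)) (snd (snd w))}
                 / measure (Q True) {w \<in> space (Q True). fst w \<in> \<X>}
          in q > 0 \<and>
             conv_prob (\<lambda>n. sample_space (P n) n)
               (\<lambda>n \<omega>. pinv (real (n1 (A n) n \<omega>)) * (\<Sum>i \<in> G1 (A n) n \<omega>. Yat \<tau> (\<omega> i))) q)"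
proof -
  interpret matching_design P Q \<X> A \<tau>
    by (rule matching_design.intro[OF P_prob P_sets Q_prob Q_sets cond_law A_fin A_meas A_cover])
  define s where "s = real dbar * \<theta>"
  have s: "0 < s" "s < 1"
    using B1 by (auto simp: s_def)
  obtain c\<pi> C\<pi> where c\<pi>: "0 < c\<pi>" "0 < C\<pi>" and prop_bounds: "\<And>n. n \<ge> 1 \<Longrightarrow>
      c\<pi> * real n powr (\<beta> - 1) \<le> prop_treated n \<and> prop_treated n \<le> C\<pi> * real n powr (\<beta> - 1)"
    using B2 by blast
  obtain Cd where mesh_bound: "\<And>n. n \<ge> 1 \<Longrightarrow> mesh (A n) \<le> Cd * real n powr (- \<theta>)"
    using B5_diam by blast
  obtain c\<nu> where c\<nu>: "0 < c\<nu>" and cell_volume: "\<And>n a. n \<ge> 1 \<Longrightarrow> a \<in> A n \<Longrightarrow> c\<nu> * real n powr (- s) \<le> measure \<nu> a"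
    using B5_vol unfolding s_def by blast
  obtain cg where cg: "0 < cg" and cg_AE: "AE x in \<nu>. x \<in> \<X> \<longrightarrow> cg \<le> f False x * g x"
    using B3_essinf by blast
  define r where "r = measure (Q True) {w \<in> space (Q True). fst w \<in> \<X>}"
  define r2 where "r2 = measure (Q True) {w \<in> space (Q True). fst w \<in> \<X> \<and> \<tau> \<le> min (fst (snd w)) (snd (snd w))}"
  interpret Q_treated: prob_space "Q True"
    by (rule Q_prob)
  have "{w \<in> space (Q True). fst w \<in> \<X>} \<in> sets (Q True)"
    unfolding space_Q Q_sets by measurable
  then have r2: "0 < r2" "r2 \<le> r"
    using B4b unfolding r_def r2_def
    by (auto simp: conj_commute intro!: Q_treated.finite_measure_mono)
  have mass: "cg * measure \<nu> a \<le> measure (Q False) {w \<in> space (Q False). fst w \<in> a}"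
    if "a \<in> A n" for n a
    using A_cover[of n] that
    by (intro measure_fst_ge_density_bound[where Y = "\<lambda>w. \<tau> \<le> min (fst (snd w)) (snd (snd w))",
          OF Q_prob Q_sets f_dens nu_sets f_meas f_nonneg g_int g_cond A_meas[OF that] _ X_sets nu_X cg_AE])
      auto
  have "prop_treated \<longlonglongrightarrow> 0"
    using prop_bounds by (intro prop_treated_tendsto_0[where C = C\<pi>, OF _ B1(2)]) auto
  then have unmatched: "(\<lambda>n. measure (PiM {1..n} (\<lambda>_. P n)) (cell_without_control n)) \<longlonglongrightarrow> 0"
    using c\<nu> cg s by (intro cell_without_control_tendsto_0[OF _ nu_sets nu_X A_disj cell_volume mass]) auto
  have mean_at_top: "filterlim (\<lambda>n. real n * measure (P n) (treated n)) at_top sequentially"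
    using prop_bounds r2 by (intro treated_mean_at_top[OF _ _ c\<pi>(1) B1(1)]) (auto simp: r_def)
  interpret iid_counts P treated cell_without_control "\<lambda>n \<omega>. real (n1 (A n) n \<omega>)"
    by (intro iid_counts.intro P_prob treated_sets mean_at_top cell_without_control_sets
        unmatched n1_eq_count_in)
  have "conv_prob sample (\<lambda>n \<omega>. pinv (real (n1 (A n) n \<omega>)) * (\<Sum>i\<in>G1 (A n) n \<omega>. Yat \<tau> (\<omega> i))) (r2 / r)"
    using r2 treated_at_risk_sets sum_Yat_eq_count_in
    by (intro conv_prob_ratio) (auto simp: measure_treated measure_treated_at_risk r_def r2_def)
  moreover have "(\<lambda>n. sqrt (real n * measure (P n) (treated n)) * mesh (A n)) \<longlonglongrightarrow> 0"
    using prop_bounds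
    by (intro sqrt_treated_mean_mult_mesh_tendsto_0[where C = C\<pi>,
          OF _ mesh_bound compact_imp_bounded[OF X_compact] c\<pi>(2) B1(1,7)]) auto
  ultimately show ?thesis
    using conv_prob_pinv conv_prob_sqrt_mult[OF mesh_A_nonneg[OF compact_imp_bounded[OF X_compact]]] r2
    by (simp add: sample_space_def Let_def r_def r2_def)
qed

end
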